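(* Let $F\neq\mathbb{RP}^2$ be a surface and $D$ a link diagram in $F$ with $n$ crossings ordered $v_1,\dots,v_n$. Let $d^+(S)=\sum_v(-1)^{t^+(S,v)}d_v(S)$, where $t^+(S,v)$ is the number of $+1$ markers of $S$ at crossings greater than $v$. For an enhanced state $S$ let $u(S)$ be the number of crossings $v_i$ with marker $+1$ in $S$ such that $i\equiv n+1\pmod 2$, and set $g(S)=(-1)^{u(S)}S$. Then $g$ induces an isomorphism of chain complexes $g:(C(D),d)\to(C(D),d^+)$.
   Context: A link diagram in $F$ is a finite collection of generically immersed closed curves with finitely many crossings with over/under information. The $(+1)$-/$(-1)$-smoothing of a crossing is the one with coefficient $A$/$A^{-1}$ in $L_p=AL_0+A^{-1}L_\infty$. An enhanced state assigns markers $\pm1$ to crossings and labels $\pm$ to the resulting circles. A circle is trivial if it bounds a disk in $F$, bounding if it bounds a disk or a Möbius band; $\mathcal C(F)$ = unoriented unbounding simple closed curves in $F$ up to homotopy. $I(S)=\#\{+1\}-\#\{-1\}$ markers, $\tau(S)=\#$(trivial circles labeled $+$)$-\#$(trivial labeled $-$), $J=I+2\tau$, $\Psi(S)=\sum\varepsilon_k\gamma_k$ over unbounding circles with labels $\varepsilon_k$. $C_{ijs}(D)$ is free abelian on enhanced states with $(I,J,\Psi)=(i,j,s)$, $C(D)=\bigoplus C_{ijs}(D)$. $[S:S']_v=1$ iff (a) $v$ has marker $+1$ in $S$ and $-1$ in $S'$, (b) other markers agree, (c) circles common to $S,S'$ have equal labels, (d) $J(S)=J(S')$, $\Psi(S)=\Psi(S')$;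 else $0$. $d_v(S)=\sum_{S'}[S:S']_vS'$; $t(S,v)$ = number of $-1$ markers of $S$ at crossings greater than $v$; $d(S)=\sum_v(-1)^{t(S,v)}d_v(S)$. *)

theory Defs
  imports Main
begin

text \<open>Combinatorial model of the enhanced-state complex of a link diagram D with n crossings
  v_1,...,v_n (identified with 1..n, ordered by the natural order) on a surface F.
  The topological input of (F,D) is abstracted into:
   circ P  : the (finite) set of circles of the smoothing in which exactly the crossings in
             P have marker +1 and the crossings in {1..n}-P have marker -1
             (circles are elements of an abstract type 'c; a circle common to two states is
             an element of both circle sets);
   triv c  : c is trivial (bounds a disk in F);
   bnd c   : c is bounding (bounds a disk or a Moebius band);
   cls c   : the class of c in C(F) (unoriented homotopy class), in an abstract type 'h.\<close>

type_synonym ('c) estate = "nat set \<times> ('c \<Rightarrow> int)"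

definition enh_states :: "nat \<Rightarrow> (nat set \<Rightarrow> 'c set) \<Rightarrow> 'c estate set" where
  "enh_states n circ = {(P, lab). P \<subseteq> {1..n} \<and> (\<forall>c\<in>circ P. lab c = 1 \<or> lab c = -1)
                                  \<and> (\<forall>c. c \<notin> circ P \<longrightarrow> lab c = 0)}"

definition I_idx :: "nat \<Rightarrow> 'c estate \<Rightarrow> int" where
  "I_idx n S = int (card (fst S)) - int (n - card (fst S))"

definition tau_idx :: "(nat set \<Rightarrow> 'c set) \<Rightarrow> ('c \<Rightarrow> bool) \<Rightarrow> 'c estate \<Rightarrow> int" where
  "tau_idx circ triv S = (\<Sum>c\<in>{c\<in>circ (fst S). triv c}. snd S c)"

definition J_idx :: "nat \<Rightarrow> (nat set \<Rightarrow> 'c set) \<Rightarrow> ('c \<Rightarrow> bool) \<Rightarrow> 'c estate \<Rightarrow> int" where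
  "J_idx n circ triv S = I_idx n S + 2 * tau_idx circ triv S"

text \<open>Psi(S) = sum of eps_k gamma_k over unbounding circles, as an element of the free abelian
  group on C(F), represented by its coefficient function.\<close>
definition Psi_idx :: "(nat set \<Rightarrow> 'c set) \<Rightarrow> ('c \<Rightarrow> bool) \<Rightarrow> ('c \<Rightarrow> 'h) \<Rightarrow> 'c estate \<Rightarrow> 'h \<Rightarrow> int" where
  "Psi_idx circ bnd cls S = (\<lambda>h. \<Sum>c\<in>{c\<in>circ (fst S). \<not> bnd c \<and> cls c = h}. snd S c)"

text \<open>The incidence number [S:S']_v (as a boolean: true iff it equals 1).\<close>
definition incid :: "nat \<Rightarrow> (nat set \<Rightarrow> 'c set) \<Rightarrow> ('c \<Rightarrow> bool) \<Rightarrow> ('c \<Rightarrow> bool) \<Rightarrow> ('c \<Rightarrow> 'h)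
                     \<Rightarrow> nat \<Rightarrow> 'c estate \<Rightarrow> 'c estate \<Rightarrow> bool" where
  "incid n circ triv bnd cls v S S' \<longleftrightarrow>
     v \<in> fst S \<and> v \<notin> fst S' \<and> fst S - {v} = fst S' - {v}
     \<and> (\<forall>c \<in> circ (fst S) \<inter> circ (fst S'). snd S c = snd S' c)
     \<and> J_idx n circ triv S = J_idx n circ triv S'
     \<and> Psi_idx circ bnd cls S = Psi_idx circ bnd cls S'"

definition t_neg :: "nat \<Rightarrow> 'c estate \<Rightarrow> nat \<Rightarrow> nat" where
  "t_neg n S v = card {w\<in>{1..n}. v < w \<and> w \<notin> fst S}"

definition t_pos :: "nat \<Rightarrow> 'c estate \<Rightarrow> nat \<Rightarrow> nat" where
  "t_pos n S v = card {w\<in>{1..n}. v < w \<and> w \<in> fst S}"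

text \<open>Chains: elements of the free abelian group C(D) on the enhanced states, as coefficient
  functions vanishing outside the (finite) set of enhanced states.\<close>
definition chains :: "nat \<Rightarrow> (nat set \<Rightarrow> 'c set) \<Rightarrow> ('c estate \<Rightarrow> int) set" where
  "chains n circ = {x. \<forall>S. S \<notin> enh_states n circ \<longrightarrow> x S = 0}"

text \<open>The differential sum_v (-1)^{tt(S,v)} d_v(S), extended linearly; with tt = t_neg this is d,
  with tt = t_pos this is d^+.\<close>
definition diff :: "nat \<Rightarrow> (nat set \<Rightarrow> 'c set) \<Rightarrow> ('c \<Rightarrow> bool) \<Rightarrow> ('c \<Rightarrow> bool) \<Rightarrow> ('c \<Rightarrow> 'h)
                    \<Rightarrow> ('c estate \<Rightarrow> nat \<Rightarrow> nat) \<Rightarrow> ('c estate \<Rightarrow> int) \<Rightarrow> ('c estate \<Rightarrow> int)" where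
  "diff n circ triv bnd cls tt x = (\<lambda>S'.
     if S' \<in> enh_states n circ then
       (\<Sum>S\<in>enh_states n circ. \<Sum>v\<in>{1..n}.
          (if incid n circ triv bnd cls v S S' then (-1) ^ tt S v * x S else 0))
     else 0)"

definition u_cnt :: "nat \<Rightarrow> 'c estate \<Rightarrow> nat" where
  "u_cnt n S = card {i\<in>fst S. i \<in> {1..n} \<and> i mod 2 = (n + 1) mod 2}"

definition g_map :: "nat \<Rightarrow> ('c estate \<Rightarrow> int) \<Rightarrow> ('c estate \<Rightarrow> int)" where
  "g_map n x = (\<lambda>S. (-1) ^ u_cnt n S * x S)"

end

theory Submission
  imports Defs
begin

text \<open>The component d_v of either differential changes the marker at v from +1 to -1.
  Since the crossings above v carry t(S,v) markers -1 and t^+(S,v) markers +1, the two signs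
  (-1)^t and (-1)^{t^+} differ by (-1)^{n-v}; and removing v from the +1 markers changes
  u(S) by one exactly when n - v is odd. So the twist (-1)^u compensates the sign difference,
  and g, a degree-preserving involution, intertwines d and d^+.\<close>

lemma t_neg_plus_t_pos:
  assumes "v \<in> {1..n}"
  shows "t_neg n S v + t_pos n S v = n - v"
proof -
  have "t_neg n S v + t_pos n S v = card {w\<in>{1..n}. v < w}"
    unfolding t_neg_def t_pos_def
    by (subst card_Un_disjoint[symmetric]) (auto intro: arg_cong[where f = card])
  also have "{w\<in>{1..n}. v < w} = {v<..n}"
    using assms by auto
  finally show ?thesis
    by simp
qed

lemma u_cnt_remove:
  assumes "v \<in> P" and "v \<in> {1..n}"
  shows "u_cnt n (P, l) = u_cnt n (P - {v}, l') + (if odd (n - v) then 1 else 0)"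
proof -
  define A where "A = {i\<in>P. i \<in> {1..n} \<and> i mod 2 = (n + 1) mod 2}"
  have "finite A"
    unfolding A_def by (rule finite_subset[of _ "{1..n}"]) auto
  have "v \<in> A \<longleftrightarrow> odd (n - v)"
    using assms unfolding A_def by auto presburger+
  moreover have "{i\<in>P - {v}. i \<in> {1..n} \<and> i mod 2 = (n + 1) mod 2} = A - {v}"
    unfolding A_def by blast
  ultimately show ?thesis
    using \<open>finite A\<close> card.remove[of A v] unfolding u_cnt_def A_def by auto
qed

lemma sign_twist:
  assumes "v \<in> P" and "v \<in> {1..n}"
  shows "(-1::int) ^ u_cnt n (P - {v}, l') * (-1) ^ t_neg n (P, l) v
       = (-1) ^ t_pos n (P, l) v * (-1) ^ u_cnt n (P, l)"
proof -
  have "even (u_cnt n (P - {v}, l') + t_neg n (P, l) v)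
      \<longleftrightarrow> even (t_pos n (P, l) v + u_cnt n (P, l))"
    using u_cnt_remove[OF assms, of l l'] t_neg_plus_t_pos[OF assms(2), of "(P, l)"]
    by (cases "odd (n - v)") presburger+
  then have "(-1::int) ^ (u_cnt n (P - {v}, l') + t_neg n (P, l) v)
      = (-1) ^ (t_pos n (P, l) v + u_cnt n (P, l))"
    by (simp add: minus_one_power_iff)
  then show ?thesis
    by (simp only: power_add)
qed

lemma incid_markers:
  assumes "incid n circ triv bnd cls v S S'"
  shows "v \<in> fst S" and "fst S' = fst S - {v}"
  using assms unfolding incid_def by auto

lemma g_map_g_map [simp]: "g_map n (g_map n x) = x"
  unfolding g_map_def by (simp add: mult.assoc[symmetric] flip: power_add)

lemma g_map_chains: "x \<in> chains n circ \<Longrightarrow> g_map n x \<in> chains n circ"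
  unfolding chains_def g_map_def by auto

lemma bij_betw_g_map: "bij_betw (g_map n) (chains n circ) (chains n circ)"
  by (rule bij_betw_byWitness[where f' = "g_map n"]) (auto simp: g_map_chains)

lemma g_map_diff:
  "g_map n (diff n circ triv bnd cls (t_neg n) x) = diff n circ triv bnd cls (t_pos n) (g_map n x)"
proof
  fix S'
  have term_twist: "(-1::int) ^ u_cnt n S' * ((-1) ^ t_neg n S v * x S)
      = (-1) ^ t_pos n S v * ((-1) ^ u_cnt n S * x S)"
    if inc: "incid n circ triv bnd cls v S S'" and v: "v \<in> {1..n}" for S v
  proof -
    obtain P l where S: "S = (P, l)"
      by fastforce
    obtain l' where S': "S' = (P - {v}, l')"
      using incid_markers(2)[OF inc] S by (cases S') auto
    show ?thesis
      using sign_twist[of v P n l' l] incid_markers(1)[OF inc] v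
      unfolding S S' by (simp add: mult.assoc[symmetric])
  qed
  show "g_map n (diff n circ triv bnd cls (t_neg n) x) S'
      = diff n circ triv bnd cls (t_pos n) (g_map n x) S'"
    unfolding g_map_def diff_def
    by (auto simp: sum_distrib_left term_twist intro!: sum.cong)
qed

theorem proposition9p2:
  fixes n :: nat
    and circ :: "nat set \<Rightarrow> 'c set"
    and triv bnd :: "'c \<Rightarrow> bool"
    and cls :: "'c \<Rightarrow> 'h"
  assumes "\<forall>P. P \<subseteq> {1..n} \<longrightarrow> finite (circ P)"
    and "\<forall>c. triv c \<longrightarrow> bnd c"
  shows "bij_betw (g_map n) (chains n circ) (chains n circ)
     \<and> (\<forall>x y :: 'c estate \<Rightarrow> int. g_map n (\<lambda>S. x S + y S) = (\<lambda>S. g_map n x S + g_map n y S))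
     \<and> (\<forall>x\<in>chains n circ.
          g_map n (diff n circ triv bnd cls (t_neg n) x)
          = diff n circ triv bnd cls (t_pos n) (g_map n x))
     \<and> (\<forall>x\<in>chains n circ. \<forall>i j s.
          (\<forall>S. x S \<noteq> 0 \<longrightarrow> I_idx n S = i \<and> J_idx n circ triv S = j \<and> Psi_idx circ bnd cls S = s)
          \<longrightarrow> (\<forall>S. g_map n x S \<noteq> 0 \<longrightarrow> I_idx n S = i \<and> J_idx n circ triv S = j \<and> Psi_idx circ bnd cls S = s))"
proof (intro conjI)
  show "bij_betw (g_map n) (chains n circ) (chains n circ)"
    by (rule bij_betw_g_map)
  show "\<forall>x y :: 'c estate \<Rightarrow> int. g_map n (\<lambda>S. x S + y S) = (\<lambda>S. g_map n x S + g_map n y S)"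
    unfolding g_map_def by (simp add: algebra_simps)
  show "\<forall>x\<in>chains n circ. g_map n (diff n circ triv bnd cls (t_neg n) x)
      = diff n circ triv bnd cls (t_pos n) (g_map n x)"
    using g_map_diff by blast
qed (auto simp: g_map_def)

end
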